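(* For all $n\ge 2$, $|F_n(321,2134)|=n^2-3n+4$.
   Context: A permutation $\pi$ avoids a classical pattern $p\in S_k$ if no subsequence of $\pi$ of length $k$ is order-isomorphic to $p$. A Fishburn permutation is a permutation $\pi=\pi_1\cdots\pi_n$ of $[n]$ for which there are no indices $i<j$ with $\pi_j<\pi_i<\pi_{i+1}$ and $\pi_i=\pi_j+1$. $F_n(\sigma_1,\dots,\sigma_k)$ denotes the set of Fishburn permutations of length $n$ avoiding each of the classical patterns $\sigma_1,\dots,\sigma_k$. *)

theory Defs
  imports Main
begin

definition perm_of :: "nat \<Rightarrow> nat list \<Rightarrow> bool" where
  "perm_of n \<pi> \<longleftrightarrow> distinct \<pi> \<and> set \<pi> = {1..n}"

definition contains :: "nat list \<Rightarrow> nat list \<Rightarrow> bool" where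
  "contains \<pi> p \<longleftrightarrow> (\<exists>f. (\<forall>i j. i < j \<and> j < length p \<longrightarrow> f i < f j)
      \<and> (\<forall>i < length p. f i < length \<pi>)
      \<and> (\<forall>i < length p. \<forall>j < length p. (\<pi> ! f i < \<pi> ! f j) \<longleftrightarrow> (p ! i < p ! j)))"

definition avoids :: "nat list \<Rightarrow> nat list \<Rightarrow> bool" where
  "avoids \<pi> p \<longleftrightarrow> \<not> contains \<pi> p"

definition fishburn :: "nat list \<Rightarrow> bool" where
  "fishburn \<pi> \<longleftrightarrow> \<not> (\<exists>i j. i < j \<and> j < length \<pi> \<and> i + 1 < length \<pi> \<and>
      \<pi> ! j < \<pi> ! i \<and> \<pi> ! i < \<pi> ! (i + 1) \<and> \<pi> ! i = \<pi> ! j + 1)"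

definition F :: "nat \<Rightarrow> nat list list \<Rightarrow> nat list set" where
  "F n ps = {\<pi>. perm_of n \<pi> \<and> fishburn \<pi> \<and> (\<forall>p \<in> set ps. avoids \<pi> p)}"

end

(*
  A permutation starting with 1 is 1 \<oplus> \<sigma>, and since neither 321 nor 2134 starts with its
  smallest entry, 1 \<oplus> \<sigma> lies in F_{n+1}(321,2134) iff \<sigma> lies in F_n(321,2134).

  Now let \<pi> start with k \<noteq> 1. The Fishburn condition at the first position forces \<pi>_2 < k,
  and then 321-avoidance forces \<pi>_2 = 1. Every entry below k must appear in increasing order
  (else 321 with k), every entry above k in decreasing order (else 2134 with k, 1), and there are
  at most two entries above k (else 321). If k = n - 1, n is inserted anywhere after the 1; if
  k = n - 2, moreover n - 1 comes last (else 321 with n, n - 1). This gives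
  1 + (n - 2) + (n - 3) permutations, so |F_n| = |F_{n-1}| + 2n - 4 for n \<ge> 3, and the formula
  follows by induction from |F_2| = 2.
*)

theory Submission
  imports Defs
begin

lemma sorted_wrt_filter_guarded:
  "sorted_wrt (\<lambda>x y. P x \<longrightarrow> P y \<longrightarrow> R x y) xs \<Longrightarrow> sorted_wrt R (filter P xs)"
  by (induction xs) auto

lemma append_eq_upt:
  assumes "us @ vs = [a..<b]"
  shows "us = [a..<a + length us]" "vs = [a + length us..<b]"
proof -
  have "length us + length vs = b - a"
    using arg_cong[OF assms, of length] by simp
  then have "us = [] \<or> a + length us \<le> b"
    by (cases us) auto
  moreover have "us = take (length us) [a..<b]" "vs = drop (length us) [a..<b]"
    using assms by (metis append_eq_conv_conj)+
  ultimately show "us = [a..<a + length us]" "vs = [a + length us..<b]"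
    by auto
qed

lemma contains_321_iff:
  "contains \<pi> [3,2,1] \<longleftrightarrow>
    (\<exists>a b c. a < b \<and> b < c \<and> c < length \<pi> \<and> \<pi>!b < \<pi>!a \<and> \<pi>!c < \<pi>!b)"
proof
  assume "contains \<pi> [3,2,1]"
  then obtain f where mono: "\<forall>i j. i < j \<and> j < 3 \<longrightarrow> f i < f j"
    and bound: "\<forall>i < 3. f i < length \<pi>"
    and order: "\<forall>i < 3. \<forall>j < 3. \<pi>!f i < \<pi>!f j \<longleftrightarrow> [3,2,1::nat]!i < [3,2,1]!j"
    unfolding contains_def by (simp add: eval_nat_numeral) blast
  have "f 0 < f 1" "f 1 < f 2" "f 2 < length \<pi>" "\<pi>!f 1 < \<pi>!f 0" "\<pi>!f 2 < \<pi>!f 1"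
    using mono[rule_format, of 0 1] mono[rule_format, of 1 2] bound
      order[rule_format, of 1 0] order[rule_format, of 2 1]
    by auto
  then show "\<exists>a b c. a < b \<and> b < c \<and> c < length \<pi> \<and> \<pi>!b < \<pi>!a \<and> \<pi>!c < \<pi>!b"
    by blast
next
  assume "\<exists>a b c. a < b \<and> b < c \<and> c < length \<pi> \<and> \<pi>!b < \<pi>!a \<and> \<pi>!c < \<pi>!b"
  then obtain a b c where "a < b" "b < c" "c < length \<pi>" "\<pi>!b < \<pi>!a" "\<pi>!c < \<pi>!b"
    by blast
  then show "contains \<pi> [3,2,1]"
    unfolding contains_def
    by (intro exI[of _ "\<lambda>i. [a, b, c] ! i"]) (auto simp: numeral_eq_Suc less_Suc_eq)
qed

lemma contains_2134_iff:
  "contains \<pi> [2,1,3,4] \<longleftrightarrow>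
    (\<exists>a b c d. a < b \<and> b < c \<and> c < d \<and> d < length \<pi> \<and>
      \<pi>!b < \<pi>!a \<and> \<pi>!a < \<pi>!c \<and> \<pi>!c < \<pi>!d)"
proof
  assume "contains \<pi> [2,1,3,4]"
  then obtain f where mono: "\<forall>i j. i < j \<and> j < 4 \<longrightarrow> f i < f j"
    and bound: "\<forall>i < 4. f i < length \<pi>"
    and order: "\<forall>i < 4. \<forall>j < 4. \<pi>!f i < \<pi>!f j \<longleftrightarrow> [2,1,3,4::nat]!i < [2,1,3,4]!j"
    unfolding contains_def by (simp add: eval_nat_numeral) blast
  have "f 0 < f 1" "f 1 < f 2" "f 2 < f 3" "f 3 < length \<pi>"
    "\<pi>!f 1 < \<pi>!f 0" "\<pi>!f 0 < \<pi>!f 2" "\<pi>!f 2 < \<pi>!f 3"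
    using mono[rule_format, of 0 1] mono[rule_format, of 1 2] mono[rule_format, of 2 3] bound
      order[rule_format, of 1 0] order[rule_format, of 0 2] order[rule_format, of 2 3]
    by auto
  then show "\<exists>a b c d. a < b \<and> b < c \<and> c < d \<and> d < length \<pi> \<and>
      \<pi>!b < \<pi>!a \<and> \<pi>!a < \<pi>!c \<and> \<pi>!c < \<pi>!d"
    by blast
next
  assume "\<exists>a b c d. a < b \<and> b < c \<and> c < d \<and> d < length \<pi> \<and>
      \<pi>!b < \<pi>!a \<and> \<pi>!a < \<pi>!c \<and> \<pi>!c < \<pi>!d"
  then obtain a b c d where "a < b" "b < c" "c < d" "d < length \<pi>"
    "\<pi>!b < \<pi>!a" "\<pi>!a < \<pi>!c" "\<pi>!c < \<pi>!d"
    by blast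
  then show "contains \<pi> [2,1,3,4]"
    unfolding contains_def
    by (intro exI[of _ "\<lambda>i. [a, b, c, d] ! i"]) (auto simp: numeral_eq_Suc less_Suc_eq)
qed

lemma contains_Cons_1_map_Suc_iff:
  assumes "\<exists>j < length p. p!j < p!0"
  shows "contains (1 # map Suc \<sigma>) p \<longleftrightarrow> contains \<sigma> p"
proof
  let ?\<pi> = "1 # map Suc \<sigma>"
  assume "contains ?\<pi> p"
  then obtain f where mono: "\<forall>i j. i < j \<and> j < length p \<longrightarrow> f i < f j"
    and bound: "\<forall>i < length p. f i < length ?\<pi>"
    and order: "\<forall>i < length p. \<forall>j < length p. ?\<pi>!f i < ?\<pi>!f j \<longleftrightarrow> p!i < p!j"
    unfolding contains_def by blast
  obtain j where j: "j < length p" "p!j < p!0"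
    using assms by blast
  have "?\<pi> ! f 0 \<noteq> 1"
  proof
    assume "?\<pi> ! f 0 = 1"
    moreover have "?\<pi> ! f j < ?\<pi> ! f 0"
      using order[rule_format, of j 0] j by fastforce
    moreover have "0 < ?\<pi> ! f j"
      using bound j by (cases "f j") auto
    ultimately show False by simp
  qed
  then have "0 < f 0"
    by (cases "f 0") auto
  then have pos: "0 < f i" if "i < length p" for i
    using mono[rule_format, of 0 i] that by (cases i) auto
  show "contains \<sigma> p"
    unfolding contains_def
  proof (intro exI[of _ "\<lambda>i. f i - 1"] conjI allI impI)
    fix i j assume "i < j \<and> j < length p"
    then show "f i - 1 < f j - 1"
      using mono[rule_format, of i j] pos[of i] by simp
  next
    fix i assume "i < length p"
    then show "f i - 1 < length \<sigma>"
      using bound[rule_format, of i] pos[of i] by simp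
  next
    fix i j assume ij: "i < length p" "j < length p"
    have "?\<pi> ! f k = Suc (\<sigma> ! (f k - 1))" if "k < length p" for k
      using bound[rule_format, OF that] pos[OF that] by (cases "f k") auto
    then show "\<sigma> ! (f i - 1) < \<sigma> ! (f j - 1) \<longleftrightarrow> p!i < p!j"
      using order ij by (metis Suc_less_eq)
  qed
next
  assume "contains \<sigma> p"
  then obtain f where "\<forall>i j. i < j \<and> j < length p \<longrightarrow> f i < f j"
    "\<forall>i < length p. f i < length \<sigma>"
    "\<forall>i < length p. \<forall>j < length p. \<sigma>!f i < \<sigma>!f j \<longleftrightarrow> p!i < p!j"
    unfolding contains_def by blast
  then show "contains (1 # map Suc \<sigma>) p"
    unfolding contains_def by (intro exI[of _ "\<lambda>i. Suc (f i)"]) auto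
qed

lemma length_perm_of: "perm_of n \<pi> \<Longrightarrow> length \<pi> = n"
  unfolding perm_of_def using distinct_card by fastforce

lemma perm_of_Cons_1_map_Suc_iff: "perm_of (Suc n) (1 # map Suc \<sigma>) \<longleftrightarrow> perm_of n \<sigma>"
proof
  assume perm: "perm_of (Suc n) (1 # map Suc \<sigma>)"
  then have "1 \<notin> Suc ` set \<sigma>" "insert 1 (Suc ` set \<sigma>) = {1..Suc n}"
    by (simp_all add: perm_of_def)
  then have "Suc ` set \<sigma> = {1..Suc n} - {1}"
    by blast
  also have "\<dots> = Suc ` {1..n}"
    by (auto simp: image_iff)
  finally have "set \<sigma> = {1..n}"
    by (simp only: inj_image_eq_iff inj_Suc)
  then show "perm_of n \<sigma>"
    using perm by (simp add: perm_of_def distinct_map)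
next
  assume "perm_of n \<sigma>"
  moreover have "insert 1 (Suc ` {1..n}) = {1..Suc n}"
    by (auto simp: image_iff)
  ultimately show "perm_of (Suc n) (1 # map Suc \<sigma>)"
    by (auto simp: perm_of_def distinct_map)
qed

lemma fishburn_Cons_1_map_Suc_iff: "fishburn (1 # map Suc \<sigma>) \<longleftrightarrow> fishburn \<sigma>"
  unfolding fishburn_def
proof (rule iffI; erule contrapos_nn; elim exE conjE)
  let ?\<pi> = "1 # map Suc \<sigma>"
  fix i j assume ij: "i < j" "j < length ?\<pi>" "i + 1 < length ?\<pi>"
    "?\<pi> ! j < ?\<pi> ! i" "?\<pi> ! i < ?\<pi> ! (i + 1)" "?\<pi> ! i = ?\<pi> ! j + 1"
  obtain j' where j: "j = Suc j'"
    using ij by (cases j) auto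
  obtain i' where i: "i = Suc i'"
    using ij unfolding j by (cases i) auto
  show "\<exists>i j. i < j \<and> j < length \<sigma> \<and> i + 1 < length \<sigma> \<and>
      \<sigma> ! j < \<sigma> ! i \<and> \<sigma> ! i < \<sigma> ! (i + 1) \<and> \<sigma> ! i = \<sigma> ! j + 1"
    using ij unfolding i j by (intro exI[of _ i'] exI[of _ j']) auto
next
  fix i j assume "i < j" "j < length \<sigma>" "i + 1 < length \<sigma>"
    "\<sigma> ! j < \<sigma> ! i" "\<sigma> ! i < \<sigma> ! (i + 1)" "\<sigma> ! i = \<sigma> ! j + 1"
  then show "\<exists>i j. i < j \<and> j < length (1 # map Suc \<sigma>) \<and> i + 1 < length (1 # map Suc \<sigma>) \<and>
      (1 # map Suc \<sigma>) ! j < (1 # map Suc \<sigma>) ! i \<and>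
      (1 # map Suc \<sigma>) ! i < (1 # map Suc \<sigma>) ! (i + 1) \<and>
      (1 # map Suc \<sigma>) ! i = (1 # map Suc \<sigma>) ! j + 1"
    by (intro exI[of _ "Suc i"] exI[of _ "Suc j"]) auto
qed

lemma perm_of_Suc_head_1_eq:
  assumes "perm_of (Suc n) \<pi>" "\<pi> ! 0 = 1"
  shows "\<pi> = 1 # map Suc (map (\<lambda>x. x - 1) (tl \<pi>))"
proof -
  have \<pi>: "\<pi> = 1 # tl \<pi>"
    using assms length_perm_of[OF assms(1)] by (cases \<pi>) auto
  then have "0 \<notin> set (tl \<pi>)"
    using assms(1) unfolding perm_of_def
    by (metis atLeastAtMost_iff not_one_le_zero set_subset_Cons subsetD)
  then have "map Suc (map (\<lambda>x. x - 1) (tl \<pi>)) = tl \<pi>"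
    by (auto intro!: map_idI) (metis Suc_pred neq0_conv)
  then show ?thesis
    using \<pi> by simp
qed

lemma finite_F: "finite (F n ps)"
proof (rule finite_subset)
  show "F n ps \<subseteq> {xs. set xs \<subseteq> {1..n} \<and> length xs = n}"
    unfolding F_def perm_of_def using distinct_card by fastforce
  show "finite {xs. set xs \<subseteq> {1..n} \<and> length xs = n}"
    by (rule finite_lists_length_eq) simp
qed

lemma Cons_1_map_Suc_in_F_iff:
  assumes "\<forall>p \<in> set ps. \<exists>j < length p. p!j < p!0"
  shows "1 # map Suc \<sigma> \<in> F (Suc n) ps \<longleftrightarrow> \<sigma> \<in> F n ps"
  unfolding F_def mem_Collect_eq avoids_def perm_of_Cons_1_map_Suc_iff fishburn_Cons_1_map_Suc_iff
  using assms contains_Cons_1_map_Suc_iff by blast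

lemma F_head_1_eq:
  assumes "\<forall>p \<in> set ps. \<exists>j < length p. p!j < p!0"
  shows "{\<pi> \<in> F (Suc n) ps. \<pi> ! 0 = 1} = (\<lambda>\<sigma>. 1 # map Suc \<sigma>) ` F n ps"
proof (intro equalityI subsetI)
  fix \<pi> assume "\<pi> \<in> {\<pi> \<in> F (Suc n) ps. \<pi> ! 0 = 1}"
  then have "\<pi> \<in> F (Suc n) ps" "\<pi> = 1 # map Suc (map (\<lambda>x. x - 1) (tl \<pi>))"
    using perm_of_Suc_head_1_eq unfolding F_def by auto
  then show "\<pi> \<in> (\<lambda>\<sigma>. 1 # map Suc \<sigma>) ` F n ps"
    using Cons_1_map_Suc_in_F_iff[OF assms] by (metis image_eqI)
qed (use Cons_1_map_Suc_in_F_iff[OF assms] in auto)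

abbreviation Av :: "nat \<Rightarrow> nat list set" where
  "Av n \<equiv> F n [[3,2,1],[2,1,3,4]]"

lemma mem_Av_iff:
  "\<pi> \<in> Av n \<longleftrightarrow> perm_of n \<pi> \<and> fishburn \<pi> \<and>
    \<not> (\<exists>a b c. a < b \<and> b < c \<and> c < length \<pi> \<and> \<pi>!b < \<pi>!a \<and> \<pi>!c < \<pi>!b) \<and>
    \<not> (\<exists>a b c d. a < b \<and> b < c \<and> c < d \<and> d < length \<pi> \<and>
      \<pi>!b < \<pi>!a \<and> \<pi>!a < \<pi>!c \<and> \<pi>!c < \<pi>!d)"
  unfolding F_def avoids_def contains_321_iff[symmetric] contains_2134_iff[symmetric] by simp

lemma map_upt_in_Av:
  assumes inj: "\<And>a b. a < N \<Longrightarrow> b < N \<Longrightarrow> g a = g b \<Longrightarrow> a = b"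
    and range: "\<And>a. a < N \<Longrightarrow> 1 \<le> g a \<and> g a \<le> N"
    and fishburn: "\<And>i j. i < j \<Longrightarrow> j < N \<Longrightarrow> i + 1 < N \<Longrightarrow>
      g j < g i \<Longrightarrow> g i < g (i + 1) \<Longrightarrow> g i = g j + 1 \<Longrightarrow> False"
    and no_321: "\<And>a b c. a < b \<Longrightarrow> b < c \<Longrightarrow> c < N \<Longrightarrow> g b < g a \<Longrightarrow> g c < g b \<Longrightarrow> False"
    and no_2134: "\<And>a b c d. a < b \<Longrightarrow> b < c \<Longrightarrow> c < d \<Longrightarrow> d < N \<Longrightarrow>
      g b < g a \<Longrightarrow> g a < g c \<Longrightarrow> g c < g d \<Longrightarrow> False"
  shows "map g [0..<N] \<in> Av N"
proof -
  have inj_on: "inj_on g {0..<N}"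
    using inj by (auto simp: inj_on_def)
  have "g ` {0..<N} \<subseteq> {1..N}"
    using range by auto
  moreover have "card (g ` {0..<N}) = card {1..N}"
    using card_image[OF inj_on] by simp
  ultimately have "g ` {0..<N} = {1..N}"
    by (simp add: card_subset_eq)
  then have "perm_of N (map g [0..<N])"
    using inj_on by (simp add: perm_of_def distinct_map)
  moreover have "fishburn (map g [0..<N])"
    unfolding fishburn_def using fishburn by (auto simp del: upt_Suc)
  ultimately show ?thesis
    unfolding mem_Av_iff using no_321 no_2134 by auto
qed

definition shape_A :: "nat \<Rightarrow> nat list" where
  "shape_A N = N # [1..<N]"

definition shape_B :: "nat \<Rightarrow> nat \<Rightarrow> nat list" where
  "shape_B N j = (N - 1) # [1..<j + 1] @ N # [j + 1..<N - 1]"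

definition shape_C :: "nat \<Rightarrow> nat \<Rightarrow> nat list" where
  "shape_C N j = (N - 2) # [1..<j + 1] @ N # [j + 1..<N - 2] @ [N - 1]"

lemma shape_A_eq_map: "1 \<le> N \<Longrightarrow> shape_A N = map (\<lambda>i. if i = 0 then N else i) [0..<N]"
  unfolding shape_A_def by (rule nth_equalityI) (auto simp: nth_Cons')

lemma shape_B_eq_map:
  "1 \<le> j \<Longrightarrow> j \<le> N - 2 \<Longrightarrow>
    shape_B N j =
      map (\<lambda>i. if i = 0 then N - 1 else if i \<le> j then i else if i = j + 1 then N else i - 1) [0..<N]"
  unfolding shape_B_def by (rule nth_equalityI) (auto simp: nth_Cons' nth_append)

lemma shape_A_in_Av:
  assumes "2 \<le> N"
  shows "shape_A N \<in> Av N"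
  unfolding shape_A_eq_map[OF order.trans[OF one_le_numeral assms]]
  by (rule map_upt_in_Av) (use assms in \<open>auto split: if_splits\<close>)

lemma shape_B_in_Av:
  assumes "1 \<le> j" "j \<le> N - 2"
  shows "shape_B N j \<in> Av N"
  unfolding shape_B_eq_map[OF assms]
  by (rule map_upt_in_Av) (use assms in \<open>auto split: if_splits\<close>)

lemma shape_C_eq_map:
  assumes j: "1 \<le> j" "j \<le> N - 3"
  shows "shape_C N j = map (\<lambda>i. if i = 0 then N - 2 else if i \<le> j then i else if i = j + 1 then N
      else if i = N - 1 then N - 1 else i - 1) [0..<N]" (is "_ = map ?g [0..<N]")
proof (rule nth_equalityI)
  define tl_C where "tl_C = [1..<j + 1] @ N # [j + 1..<N - 2] @ [N - 1]"
  have shape: "shape_C N j = (N - 2) # tl_C"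
    unfolding shape_C_def tl_C_def ..
  then show "length (shape_C N j) = length (map ?g [0..<N])"
    using j unfolding tl_C_def by simp
  fix i assume "i < length (shape_C N j)"
  then have "i < N"
    using j unfolding shape tl_C_def by simp
  then consider "i = 0" | "1 \<le> i" "i \<le> j" | "i = j + 1" | "j + 2 \<le> i" "i \<le> N - 2" | "i = N - 1"
    by linarith
  then show "shape_C N j ! i = map ?g [0..<N] ! i"
    by cases
      (use j \<open>i < N\<close> in \<open>auto simp: shape tl_C_def nth_Cons' nth_append simp del: upt_Suc\<close>)
qed

lemma shape_C_in_Av:
  assumes "1 \<le> j" "j \<le> N - 3"
  shows "shape_C N j \<in> Av N"
  unfolding shape_C_eq_map[OF assms]
  by (rule map_upt_in_Av) (use assms in \<open>auto split: if_splits\<close>)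

(* \<pi> = k # \<tau>, so \<tau> ! i is the entry \<pi>_(i+2) of the paper's 1-based notation. *)
locale Av_head_not_1 =
  fixes N k :: nat and \<tau> :: "nat list"
  assumes mem_Av: "k # \<tau> \<in> Av N" and head_ne_1: "k \<noteq> 1"
begin

lemma distinct_tau: "distinct \<tau>"
  and set_tau: "set \<tau> = {1..N} - {k}"
  and k_bounds: "2 \<le> k" "k \<le> N"
  and length_tau: "length \<tau> = N - 1"
proof -
  have perm: "perm_of N (k # \<tau>)"
    using mem_Av unfolding mem_Av_iff by blast
  then show "distinct \<tau>" "set \<tau> = {1..N} - {k}"
    unfolding perm_of_def by auto
  have "k \<in> {1..N}"
    using perm unfolding perm_of_def by (metis list.set_intros(1))
  then show "2 \<le> k" "k \<le> N"
    using head_ne_1 by auto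
  show "length \<tau> = N - 1"
    using length_perm_of[OF perm] by simp
qed

lemma nth_tau_mem: "i < length \<tau> \<Longrightarrow> \<tau> ! i \<in> {1..N} - {k}"
  using set_tau nth_mem by blast

lemma exists_position: "v \<in> {1..N} - {k} \<Longrightarrow> \<exists>i < length \<tau>. \<tau> ! i = v"
  using set_tau by (metis in_set_conv_nth)

lemma no_321: "a < b \<Longrightarrow> b < c \<Longrightarrow> c < length \<tau> \<Longrightarrow> \<tau>!b < \<tau>!a \<Longrightarrow> \<tau>!c < \<tau>!b \<Longrightarrow> False"
  using mem_Av unfolding mem_Av_iff
  by (metis (no_types, lifting) Suc_less_eq length_Cons nth_Cons_Suc)

lemma no_321_head: "a < b \<Longrightarrow> b < length \<tau> \<Longrightarrow> \<tau>!a < k \<Longrightarrow> \<tau>!b < \<tau>!a \<Longrightarrow> False"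
  using mem_Av unfolding mem_Av_iff
  by (metis (no_types, lifting) Suc_less_eq length_Cons nth_Cons_0 nth_Cons_Suc zero_less_Suc)

lemma no_2134_head:
  "a < b \<Longrightarrow> b < c \<Longrightarrow> c < length \<tau> \<Longrightarrow> \<tau>!a < k \<Longrightarrow> k < \<tau>!b \<Longrightarrow> \<tau>!b < \<tau>!c \<Longrightarrow> False"
  using mem_Av unfolding mem_Av_iff
  by (metis (no_types, lifting) Suc_less_eq length_Cons nth_Cons_0 nth_Cons_Suc zero_less_Suc)

lemma no_fishburn_head:
  assumes "j < length \<tau>" "\<tau>!j + 1 = k" "k < \<tau>!0"
  shows False
proof -
  have "0 < Suc j \<and> Suc j < length (k # \<tau>) \<and> 0 + 1 < length (k # \<tau>) \<and>
      (k # \<tau>) ! Suc j < (k # \<tau>) ! 0 \<and> (k # \<tau>) ! 0 < (k # \<tau>) ! (0 + 1) \<and>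
      (k # \<tau>) ! 0 = (k # \<tau>) ! Suc j + 1"
    using assms by auto
  then show False
    using mem_Av unfolding mem_Av_iff fishburn_def by blast
qed

lemma length_tau_pos: "0 < length \<tau>"
  using k_bounds length_tau by auto

lemma nth_tau_0: "\<tau> ! 0 = 1"
proof -
  have "\<tau> ! 0 < k"
  proof (rule ccontr)
    assume "\<not> \<tau> ! 0 < k"
    then have "k < \<tau> ! 0"
      using nth_tau_mem[OF length_tau_pos] by (simp add: nat_neq_iff)
    moreover have "k - 1 \<in> {1..N} - {k}"
      using k_bounds by auto
    then obtain j where "j < length \<tau>" "\<tau> ! j = k - 1"
      using exists_position by blast
    ultimately show False
      using no_fishburn_head[of j] k_bounds by simp
  qed
  have "1 \<in> {1..N} - {k}"
    using k_bounds by auto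
  then obtain q where q: "q < length \<tau>" "\<tau> ! q = 1"
    using exists_position by blast
  show "\<tau> ! 0 = 1"
  proof (rule ccontr)
    assume "\<tau> ! 0 \<noteq> 1"
    moreover have "1 \<le> \<tau> ! 0"
      using nth_tau_mem[OF length_tau_pos] by simp
    ultimately have "1 < \<tau> ! 0" "0 < q"
      using q by (auto intro: gr0I)
    then show False
      using no_321_head[of 0 q] q \<open>\<tau> ! 0 < k\<close> by simp
  qed
qed

lemma distinct_entries: "a < length \<tau> \<Longrightarrow> b < length \<tau> \<Longrightarrow> a \<noteq> b \<Longrightarrow> \<tau>!a \<noteq> \<tau>!b"
  using distinct_tau by (simp add: nth_eq_iff_index_eq)

lemma small_entries_increasing:
  assumes "a < b" "b < length \<tau>" "\<tau>!a < k" "\<tau>!b < k"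
  shows "\<tau>!a < \<tau>!b"
proof (rule ccontr)
  assume "\<not> \<tau>!a < \<tau>!b"
  then have "\<tau>!b < \<tau>!a"
    using distinct_entries[of a b] assms by auto
  then show False
    using no_321_head[of a b] assms by simp
qed

lemma large_entries_decreasing:
  assumes "0 < a" "a < b" "b < length \<tau>" "k < \<tau>!a" "k < \<tau>!b"
  shows "\<tau>!b < \<tau>!a"
proof (rule ccontr)
  assume "\<not> \<tau>!b < \<tau>!a"
  then have "\<tau>!a < \<tau>!b"
    using distinct_entries[of a b] assms by auto
  moreover have "\<tau>!0 < k"
    using nth_tau_0 k_bounds by simp
  ultimately show False
    using no_2134_head[of 0 a b] assms by simp
qed

lemma filter_small_eq: "filter (\<lambda>x. x < k) \<tau> = [1..<k]"
proof (rule strict_sorted_equal)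
  have "sorted_wrt (\<lambda>x y. x < k \<longrightarrow> y < k \<longrightarrow> x < y) \<tau>"
    unfolding sorted_wrt_iff_nth_less using small_entries_increasing by simp
  then show "sorted_wrt (<) (filter (\<lambda>x. x < k) \<tau>)"
    by (rule sorted_wrt_filter_guarded)
  show "sorted_wrt (<) [1..<k]"
    by simp
  show "set (filter (\<lambda>x. x < k) \<tau>) = set [1..<k]"
    using k_bounds by (auto simp: set_tau)
qed

lemma at_most_two_large_entries: "N \<le> k + 2"
proof (rule ccontr)
  assume "\<not> N \<le> k + 2"
  then have "k + 1 \<in> {1..N} - {k}" "k + 2 \<in> {1..N} - {k}" "k + 3 \<in> {1..N} - {k}"
    by auto
  then obtain a b c where a: "a < length \<tau>" "\<tau>!a = k + 3" and b: "b < length \<tau>" "\<tau>!b = k + 2"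
      and c: "c < length \<tau>" "\<tau>!c = k + 1"
    using exists_position by meson
  have later: "y < x" if "x < length \<tau>" "y < length \<tau>" "k < \<tau>!x" "\<tau>!x < \<tau>!y" for x y
  proof -
    have "0 < x"
    proof (rule gr0I)
      assume "x = 0"
      then show False
        using that nth_tau_0 k_bounds by simp
    qed
    show "y < x"
    proof (rule ccontr)
      assume "\<not> y < x"
      then have "x < y"
        using that by (cases "x = y") auto
      then show False
        using large_entries_decreasing[of x y] \<open>0 < x\<close> that by simp
    qed
  qed
  have "a < b" "b < c"
    using later[of b a] later[of c b] a b c by simp_all
  then show False
    using no_321[of a b c] a b c by simp
qed

lemma shape_if_no_large_entry:
  assumes "N = k"
  shows "k # \<tau> = shape_A N"
proof -
  have "\<forall>x \<in> set \<tau>. x < k"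
    using assms by (auto simp: set_tau)
  then have "\<tau> = [1..<k]"
    using filter_small_eq by (simp add: filter_id_conv)
  then show ?thesis
    using assms unfolding shape_A_def by simp
qed

lemma split_at_max:
  assumes "k < N"
  obtains us vs where "\<tau> = us @ N # vs" "us \<noteq> []" "N \<notin> set us" "N \<notin> set vs"
proof -
  have "N \<in> set \<tau>"
    using assms k_bounds unfolding set_tau by simp
  then obtain us vs where \<tau>: "\<tau> = us @ N # vs"
    by (meson split_list)
  have "us \<noteq> []"
  proof
    assume "us = []"
    then have "\<tau> ! 0 = N"
      unfolding \<tau> by simp
    then show False
      using nth_tau_0 assms k_bounds by simp
  qed
  moreover have "N \<notin> set us" "N \<notin> set vs"
    using distinct_tau unfolding \<tau> by simp_all
  ultimately show ?thesis
    using that \<tau> by blast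
qed

lemma shape_if_one_large_entry:
  assumes "N = k + 1"
  shows "\<exists>j \<in> {1..N - 2}. k # \<tau> = shape_B N j"
proof -
  obtain us vs where \<tau>: "\<tau> = us @ N # vs" "us \<noteq> []" "N \<notin> set us" "N \<notin> set vs"
    using split_at_max[of thesis] assms by simp
  have "x < k" if "x \<in> set us \<union> set vs" for x
  proof -
    have "x \<in> set \<tau>" "x \<noteq> N"
      using that \<tau>(1,3,4) by auto
    then show "x < k"
      using assms set_tau by auto
  qed
  then have "filter (\<lambda>x. x < k) \<tau> = us @ vs"
    using assms unfolding \<tau>(1) by (simp add: filter_id_conv)
  then have split: "us @ vs = [1..<k]"
    using filter_small_eq by simp
  have "length us + length vs = k - 1"
    using arg_cong[OF split, of length] by simp
  moreover have "1 \<le> length us"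
    using \<tau>(2) by (simp add: Suc_le_eq)
  moreover have "k # \<tau> = shape_B N (length us)"
    using append_eq_upt[OF split] assms unfolding \<tau>(1) shape_B_def by (simp add: add.commute)
  ultimately show ?thesis
    using assms by auto
qed


lemma second_largest_entry_last:
  assumes "N = k + 2" and \<tau>: "\<tau> = us @ N # vs" and "us \<noteq> []"
  obtains ws where "vs = ws @ [N - 1]"
proof -
  have "N - 1 \<notin> set us"
  proof
    assume "N - 1 \<in> set us"
    then obtain a where a: "a < length us" "us ! a = N - 1"
      by (auto simp: in_set_conv_nth)
    then have "\<tau> ! a = N - 1" "\<tau> ! length us = N" "length us < length \<tau>"
      unfolding \<tau> by (simp_all add: nth_append)
    moreover have "0 < a"
      using \<open>\<tau> ! a = N - 1\<close> nth_tau_0 assms(1) k_bounds by (auto intro: gr0I)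
    ultimately show False
      using large_entries_decreasing[of a "length us"] a assms(1) by simp
  qed
  moreover have "N - 1 \<in> set \<tau>"
    using assms(1) k_bounds unfolding set_tau by simp
  ultimately have "N - 1 \<in> set vs"
    using assms(1) unfolding \<tau> by auto
  then obtain ws zs where vs: "vs = ws @ (N - 1) # zs"
    by (meson split_list)
  have "zs = []"
  proof (rule ccontr)
    assume "zs \<noteq> []"
    then obtain z zs' where zs: "zs = z # zs'"
      by (cases zs) auto
    define q where "q = length us + 1 + length ws"
    have "\<tau> ! length us = N" "\<tau> ! q = N - 1" "\<tau> ! (q + 1) = z" "q + 1 < length \<tau>"
      unfolding \<tau> vs zs q_def by (simp_all add: nth_append)
    moreover have "z \<in> set \<tau>" "z \<noteq> N" "z \<noteq> N - 1"
      using distinct_tau unfolding \<tau> vs zs by auto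
    then have "z < N - 1"
      unfolding set_tau by auto
    ultimately show False
      using no_321[of "length us" q "q + 1"] assms(1) unfolding q_def by simp
  qed
  then show ?thesis
    using that vs by blast
qed


lemma shape_if_two_large_entries:
  assumes "N = k + 2"
  shows "\<exists>j \<in> {1..N - 3}. k # \<tau> = shape_C N j"
proof -
  obtain us vs where \<tau>: "\<tau> = us @ N # vs" "us \<noteq> []" "N \<notin> set us" "N \<notin> set vs"
    using split_at_max[of thesis] assms by simp
  obtain ws where vs: "vs = ws @ [N - 1]"
    using second_largest_entry_last[OF assms \<tau>(1,2)] .
  have "x < k" if "x \<in> set us \<union> set ws" for x
  proof -
    have "x \<in> set \<tau>" "x \<noteq> N" "x \<noteq> N - 1"
      using that distinct_tau \<tau>(3,4) unfolding \<tau>(1) vs by auto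
    then show "x < k"
      using assms set_tau by auto
  qed
  then have "filter (\<lambda>x. x < k) \<tau> = us @ ws"
    using assms unfolding \<tau>(1) vs by (simp add: filter_id_conv)
  then have split: "us @ ws = [1..<k]"
    using filter_small_eq by simp
  have "length us + length ws = k - 1"
    using arg_cong[OF split, of length] by simp
  moreover have "1 \<le> length us"
    using \<tau>(2) by (simp add: Suc_le_eq)
  moreover have "k # \<tau> = shape_C N (length us)"
    using append_eq_upt[OF split] assms unfolding \<tau>(1) vs shape_C_def by (simp add: add.commute)
  ultimately show ?thesis
    using assms by auto
qed

end

lemma Av_head_ne_1_eq:
  assumes "2 \<le> N"
  shows "{\<pi> \<in> Av N. \<pi> ! 0 \<noteq> 1} =
    insert (shape_A N) (shape_B N ` {1..N - 2} \<union> shape_C N ` {1..N - 3})"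
proof (intro equalityI subsetI)
  fix \<pi> assume "\<pi> \<in> {\<pi> \<in> Av N. \<pi> ! 0 \<noteq> 1}"
  then have mem: "\<pi> \<in> Av N" and head: "\<pi> ! 0 \<noteq> 1"
    by simp_all
  have "length \<pi> = N"
    using mem length_perm_of unfolding mem_Av_iff by blast
  then obtain k \<tau> where \<pi>: "\<pi> = k # \<tau>"
    using assms by (cases \<pi>) auto
  interpret Av_head_not_1 N k \<tau>
    using mem head unfolding \<pi> by unfold_locales simp_all
  have "N = k \<or> N = k + 1 \<or> N = k + 2"
    using at_most_two_large_entries k_bounds by auto
  then show "\<pi> \<in> insert (shape_A N) (shape_B N ` {1..N - 2} \<union> shape_C N ` {1..N - 3})"
    using shape_if_no_large_entry shape_if_one_large_entry shape_if_two_large_entries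
    unfolding \<pi> by blast
next
  fix \<pi> assume "\<pi> \<in> insert (shape_A N) (shape_B N ` {1..N - 2} \<union> shape_C N ` {1..N - 3})"
  then show "\<pi> \<in> {\<pi> \<in> Av N. \<pi> ! 0 \<noteq> 1}"
    using assms shape_A_in_Av shape_B_in_Av shape_C_in_Av
    by (auto simp: shape_A_def shape_B_def shape_C_def)
qed

lemma shape_B_inj_on: "inj_on (shape_B N) {1..N - 2}"
proof (rule inj_onI)
  have "length (takeWhile (\<lambda>x. x \<noteq> N) (tl (shape_B N j))) = j" if "j \<in> {1..N - 2}" for j
    using that by (auto simp: shape_B_def takeWhile_append simp del: upt_Suc)
  then show "shape_B N i = shape_B N j \<Longrightarrow> i \<in> {1..N - 2} \<Longrightarrow> j \<in> {1..N - 2} \<Longrightarrow> i = j" for i j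
    by metis
qed

lemma shape_C_inj_on: "inj_on (shape_C N) {1..N - 3}"
proof (rule inj_onI)
  have "length (takeWhile (\<lambda>x. x \<noteq> N) (tl (shape_C N j))) = j" if "j \<in> {1..N - 3}" for j
    using that by (auto simp: shape_C_def takeWhile_append simp del: upt_Suc)
  then show "shape_C N i = shape_C N j \<Longrightarrow> i \<in> {1..N - 3} \<Longrightarrow> j \<in> {1..N - 3} \<Longrightarrow> i = j" for i j
    by metis
qed

lemma card_Av_head_ne_1:
  assumes "2 \<le> N"
  shows "card {\<pi> \<in> Av N. \<pi> ! 0 \<noteq> 1} = 1 + (N - 2) + (N - 3)"
proof -
  have "shape_A N \<notin> shape_B N ` {1..N - 2} \<union> shape_C N ` {1..N - 3}"
    by (auto simp: shape_A_def shape_B_def shape_C_def)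
  moreover have "shape_B N ` {1..N - 2} \<inter> shape_C N ` {1..N - 3} = {}"
    by (auto simp: shape_B_def shape_C_def)
  moreover have "card (shape_B N ` {1..N - 2}) = N - 2" "card (shape_C N ` {1..N - 3}) = N - 3"
    using card_image[OF shape_B_inj_on] card_image[OF shape_C_inj_on] by simp_all
  ultimately show ?thesis
    unfolding Av_head_ne_1_eq[OF assms] by (simp add: card_Un_disjoint)
qed

lemma Av_head_1_eq: "{\<pi> \<in> Av (Suc n). \<pi> ! 0 = 1} = (\<lambda>\<sigma>. 1 # map Suc \<sigma>) ` Av n"
  by (rule F_head_1_eq) (auto intro!: exI[of _ 1])

lemma card_Av_Suc:
  assumes "1 \<le> n"
  shows "card (Av (Suc n)) = card (Av n) + 1 + (n - 1) + (n - 2)"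
proof -
  let ?one = "{\<pi> \<in> Av (Suc n). \<pi> ! 0 = 1}" and ?other = "{\<pi> \<in> Av (Suc n). \<pi> ! 0 \<noteq> 1}"
  have "card (Av (Suc n)) = card (?one \<union> ?other)"
    by (rule arg_cong[where f = card]) blast
  also have "\<dots> = card ?one + card ?other"
    by (rule card_Un_disjoint) (auto intro: finite_subset[OF _ finite_F])
  also have "card ?one = card (Av n)"
    unfolding Av_head_1_eq by (rule card_image) (simp add: inj_on_def)
  also have "card ?other = 1 + (n - 1) + (n - 2)"
    using card_Av_head_ne_1[of "Suc n"] assms by simp
  finally show ?thesis
    by simp
qed

lemma Av_1: "Av 1 = {[1]}"
proof (intro equalityI subsetI)
  fix \<pi> assume "\<pi> \<in> Av 1"
  then have "length \<pi> = 1" "set \<pi> = {1}"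
    using length_perm_of unfolding mem_Av_iff perm_of_def by auto
  then show "\<pi> \<in> {[1]}"
    by (cases \<pi>) auto
qed (unfold mem_Av_iff perm_of_def fishburn_def, simp)

theorem mainTheorem7:
  fixes n :: nat
  assumes "n \<ge> 2"
  shows "int (card (F n [[3,2,1],[2,1,3,4]])) = int n ^ 2 - 3 * int n + 4"
  using assms
proof (induction n rule: nat_induct_at_least)
  case base
  have "card (Av 1) = 1"
    unfolding Av_1 by simp
  moreover have "card (Av 2) = card (Av 1) + 1"
    using card_Av_Suc[of 1] by (simp add: numeral_2_eq_2)
  ultimately show ?case
    by simp
next
  case (Suc n)
  then show ?case
    using card_Av_Suc[of n] by (simp add: power2_eq_square algebra_simps)
qed

end
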